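(* Let $a_0,a_1,\dots$ and $b_0,b_1,\dots$ be distinct complex numbers and $\mathscr L$ a linear functional on the space of rational functions of $t$ whose poles lie in $\{a_j\}\cup\{b_j\}$. For $n\ge0$ let $\mathsf A_n,\mathsf B_n,\mathsf C_n$ be polynomials of degree $n$ such that for every polynomial $p$ of degree $<n$: $\mathscr L\big(\mathsf A_n(t)p(t)/[(t-a_0)\cdots(t-a_n)(t-b_0)\cdots(t-b_{n-1})]\big)=0$, $\mathscr L\big(\mathsf B_n(t)p(t)/[(t-a_0)\cdots(t-a_{n-1})(t-b_0)\cdots(t-b_n)]\big)=0$, $\mathscr L\big(\mathsf C_n(t)p(t)/[(t-a_0)\cdots(t-a_n)(t-b_0)\cdots(t-b_n)]\big)=0$, and assume each of these three orthogonality conditions determines its polynomial uniquely up to a constant factor. Then there are constants $\kappa_1,\kappa_2,\kappa_3$ (possibly zero) such that $$\kappa_1\mathsf A_n(t)=\frac{\mathsf C_n(b_n)\mathsf A_{n+1}(t)-\mathsf A_{n+1}(b_n)\mathsf C_n(t)}{t-b_n},\qquad \kappa_2\mathsf B_n(t)=\frac{\mathsf C_n(a_n)\mathsf B_{n+1}(t)-\mathsf B_{n+1}(a_n)\mathsf C_n(t)}{t-a_n},$$ $$\kappa_3\mathsf C_n(t)=\frac{\mathsf A_{n+1}(a_{n+1})\mathsf C_{n+1}(t)-\mathsf C_{n+1}(a_{n+1})\mathsf A_{n+1}(t)}{t-a_{n+1}},$$ the right-hand sides being polynomials in $t$. *)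

theory Defs
  imports "HOL-Computational_Algebra.Polynomial" "HOL-Computational_Algebra.Fraction_Field"
begin

definition rat_space :: "(nat \<Rightarrow> complex) \<Rightarrow> (nat \<Rightarrow> complex) \<Rightarrow> complex poly fract set" where
  "rat_space a b = {Fract p q | p q. q \<noteq> 0 \<and> (\<forall>z. poly q z = 0 \<longrightarrow> z \<in> range a \<union> range b)}"

text \<open>A linear functional on the space S (complex scalars act as constant rational functions).\<close>
definition linear_functional_on :: "complex poly fract set \<Rightarrow> (complex poly fract \<Rightarrow> complex) \<Rightarrow> bool" where
  "linear_functional_on S L \<longleftrightarrow>
     (\<forall>f\<in>S. \<forall>g\<in>S. L (f + g) = L f + L g) \<and>
     (\<forall>c. \<forall>f\<in>S. L (Fract [:c:] 1 * f) = c * L f)"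

definition lin_prod :: "(nat \<Rightarrow> complex) \<Rightarrow> nat \<Rightarrow> complex poly" where
  "lin_prod c n = (\<Prod>j<n. [:- c j, 1:])"

definition orth :: "(complex poly fract \<Rightarrow> complex) \<Rightarrow> (nat \<Rightarrow> complex) \<Rightarrow> (nat \<Rightarrow> complex)
    \<Rightarrow> nat \<Rightarrow> nat \<Rightarrow> nat \<Rightarrow> complex poly \<Rightarrow> bool" where
  "orth L a b k m n P \<longleftrightarrow>
     (\<forall>p. degree p < n \<longrightarrow> L (Fract (P * p) (lin_prod a k * lin_prod b m)) = 0)"

end

theory Submission
  imports Defs
begin

text \<open>All three identities are instances of one principle.  Suppose \<open>P\<close>, of degree \<open>n\<close>, spans
  the polynomials of degree at most \<open>n\<close> that are orthogonal to all polynomials of degree \<open>< n\<close>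
  with respect to a denominator \<open>D\<close>, and let \<open>X\<close>, \<open>Y\<close> of degree at most \<open>n + 1\<close> be orthogonal
  to the same polynomials with respect to \<open>D (t - c)\<close>.  The combination
  \<open>R = Y(c) X - X(c) Y\<close> vanishes at \<open>c\<close>, so \<open>R = (t - c) Q\<close> with \<open>deg Q \<le> n\<close>; cancelling
  \<open>t - c\<close> in \<open>R p / (D (t - c))\<close> shows that \<open>Q\<close> is orthogonal with respect to \<open>D\<close>, hence
  \<open>Q = \<kappa> P\<close>.  The hypotheses on \<open>A (n+1)\<close>, \<open>B (n+1)\<close>, \<open>C (n+1)\<close> are brought into this form by
  the same cancellation: orthogonality up to degree \<open>n + 1\<close> with respect to \<open>D (t - c)\<close>
  implies orthogonality up to degree \<open>n\<close> with respect to \<open>D\<close>.\<close>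

lemma Fract_mult_right_cancel: "r \<noteq> 0 \<Longrightarrow> Fract (X * r) (D * r) = Fract X D"
  using mult_fract_cancel[of r X D] by (simp add: mult.commute)

lemma Fract_add_numerator: "Fract (X + Y) D = Fract X D + Fract Y D"
  by (cases "D = 0") (simp_all add: eq_fract algebra_simps)

lemma lin_prod_Suc: "lin_prod c (Suc k) = lin_prod c k * [:- c k, 1:]"
  by (simp add: lin_prod_def)

lemma Fract_lin_prod_in_rat_space: "Fract X (lin_prod a k * lin_prod b m) \<in> rat_space a b"
proof -
  have "lin_prod a k * lin_prod b m \<noteq> 0"
    by (simp add: lin_prod_def)
  moreover have "z \<in> range a \<union> range b" if "poly (lin_prod a k * lin_prod b m) z = 0" for z
    using that by (auto simp: lin_prod_def poly_prod)
  ultimately show ?thesis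
    unfolding rat_space_def by blast
qed

lemma multiple_of_degree_le:
  fixes V :: "'a::field poly \<Rightarrow> bool"
  assumes closed: "\<And>P Q \<alpha> \<beta>. V P \<Longrightarrow> V Q \<Longrightarrow> V (smult \<alpha> P + smult \<beta> Q)"
    and uniq: "\<And>Q. Q \<noteq> 0 \<Longrightarrow> degree Q = n \<Longrightarrow> V Q \<Longrightarrow> \<exists>c. Q = smult c P"
    and P: "degree P = n" "V P"
    and Q: "V Q" "degree Q \<le> n"
  shows "\<exists>c. Q = smult c P"
proof (cases "Q = 0 \<or> degree Q = n")
  case True
  then show ?thesis
    using uniq Q by (metis smult_0_left)
next
  case False
  then have less: "degree Q < degree P"
    using P Q by simp
  have "V (smult 1 P + smult 1 Q)"
    using closed P Q by blast
  moreover have "degree (P + Q) = n" "P + Q \<noteq> 0"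
    using degree_add_eq_left[OF less] less P by auto
  ultimately obtain c where "P + Q = smult c P"
    using uniq by auto
  then have "Q = smult (c - 1) P"
    by (simp add: algebra_simps smult_diff_left)
  then show ?thesis ..
qed

definition orth_denom :: "(complex poly fract \<Rightarrow> complex) \<Rightarrow> complex poly \<Rightarrow> nat \<Rightarrow> complex poly \<Rightarrow> bool"
  where "orth_denom L D n P \<longleftrightarrow> (\<forall>p. degree p < n \<longrightarrow> L (Fract (P * p) D) = 0)"

lemma orth_iff_orth_denom: "orth L a b k m n P \<longleftrightarrow> orth_denom L (lin_prod a k * lin_prod b m) n P"
  by (simp add: orth_def orth_denom_def)

lemma orth_mono: "orth L a b k m N P \<Longrightarrow> n \<le> N \<Longrightarrow> orth L a b k m n P"
  unfolding orth_def by auto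

lemma orth_denom_mult_iff:
  assumes "r \<noteq> 0"
  shows "orth_denom L (D * r) n (P * r) \<longleftrightarrow> orth_denom L D n P"
proof -
  have "Fract (P * r * p) (D * r) = Fract (P * p) D" for p
    using Fract_mult_right_cancel[OF assms, of "P * p" D] by (simp only: ac_simps)
  then show ?thesis
    by (simp add: orth_denom_def)
qed

lemma orth_denom_mult_lower:
  assumes r: "r \<noteq> 0" and orth: "orth_denom L (D * r) (n + degree r) P"
  shows "orth_denom L D n P"
  unfolding orth_denom_def
proof (intro allI impI)
  fix p :: "complex poly"
  assume p: "degree p < n"
  have "degree (p * r) < n + degree r"
    using p r by (cases "p = 0") (simp_all add: degree_mult_eq)
  then have "L (Fract (P * (p * r)) (D * r)) = 0"
    using orth by (simp add: orth_denom_def)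
  moreover have "Fract (P * (p * r)) (D * r) = Fract (P * p) D"
    using Fract_mult_right_cancel[OF r, of "P * p" D] by (simp only: mult.assoc)
  ultimately show "L (Fract (P * p) D) = 0"
    by simp
qed

lemma orth_Suc_left_lower:
  assumes "orth L a b (Suc k) m (Suc n) P"
  shows "orth L a b k m n P"
proof -
  have denom: "lin_prod a (Suc k) * lin_prod b m = lin_prod a k * lin_prod b m * [:- a k, 1:]"
    by (simp only: lin_prod_Suc mult_ac)
  have degree: "n + degree [:- a k, 1:] = Suc n"
    by simp
  have "orth_denom L (lin_prod a k * lin_prod b m * [:- a k, 1:]) (n + degree [:- a k, 1:]) P"
    using assms by (simp only: orth_iff_orth_denom denom degree)
  then show ?thesis
    unfolding orth_iff_orth_denom by (rule orth_denom_mult_lower[rotated]) simp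
qed

lemma orth_Suc_right_lower:
  assumes "orth L a b k (Suc m) (Suc n) P"
  shows "orth L a b k m n P"
proof -
  have denom: "lin_prod a k * lin_prod b (Suc m) = lin_prod a k * lin_prod b m * [:- b m, 1:]"
    by (simp only: lin_prod_Suc mult_ac)
  have degree: "n + degree [:- b m, 1:] = Suc n"
    by simp
  have "orth_denom L (lin_prod a k * lin_prod b m * [:- b m, 1:]) (n + degree [:- b m, 1:]) P"
    using assms by (simp only: orth_iff_orth_denom denom degree)
  then show ?thesis
    unfolding orth_iff_orth_denom by (rule orth_denom_mult_lower[rotated]) simp
qed

lemma linear_functional_Fract_lincomb:
  assumes lin: "linear_functional_on S L" and mem: "\<And>X. Fract X D \<in> S"
  shows "L (Fract (smult \<alpha> X + smult \<beta> Y) D) = \<alpha> * L (Fract X D) + \<beta> * L (Fract Y D)"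
proof -
  have add: "\<And>f g. f \<in> S \<Longrightarrow> g \<in> S \<Longrightarrow> L (f + g) = L f + L g"
    and scale: "\<And>c f. f \<in> S \<Longrightarrow> L (Fract [:c:] 1 * f) = c * L f"
    using lin unfolding linear_functional_on_def by blast+
  have "L (Fract (smult \<alpha> X + smult \<beta> Y) D) = L (Fract (smult \<alpha> X) D) + L (Fract (smult \<beta> Y) D)"
    by (simp only: Fract_add_numerator add mem)
  also have "\<dots> = L (Fract [:\<alpha>:] 1 * Fract X D) + L (Fract [:\<beta>:] 1 * Fract Y D)"
    by simp
  finally show ?thesis
    by (simp only: scale mem)
qed

lemma orth_denom_lincomb:
  assumes "linear_functional_on S L" "\<And>X. Fract X D \<in> S"
    and "orth_denom L D n P" "orth_denom L D n Q"
  shows "orth_denom L D n (smult \<alpha> P + smult \<beta> Q)"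
  using assms linear_functional_Fract_lincomb[OF assms(1,2)]
  by (simp add: orth_denom_def algebra_simps)

lemma linear_factor_relation:
  assumes lin: "linear_functional_on S L" and mem: "\<And>X. Fract X (D * [:- c, 1:]) \<in> S"
    and uniq: "\<And>Q. Q \<noteq> 0 \<Longrightarrow> degree Q = n \<Longrightarrow> orth_denom L D n Q \<Longrightarrow> \<exists>\<kappa>. Q = smult \<kappa> P"
    and P: "degree P = n" "orth_denom L D n P"
    and X: "degree X \<le> Suc n" "orth_denom L (D * [:- c, 1:]) n X"
    and Y: "degree Y \<le> Suc n" "orth_denom L (D * [:- c, 1:]) n Y"
  shows "\<exists>\<kappa>. smult \<kappa> P * [:- c, 1:] = smult (poly Y c) X - smult (poly X c) Y"
proof -
  define R where "R = smult (poly Y c) X + smult (- poly X c) Y"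
  have "poly R c = 0"
    by (simp add: R_def)
  then obtain Q where RQ: "R = Q * [:- c, 1:]"
    by (metis dvdE mult.commute poly_eq_0_iff_dvd)
  have "degree R \<le> Suc n"
    unfolding R_def using X Y by (meson degree_add_le degree_smult_le order_trans)
  have degQ: "degree Q \<le> n"
  proof (cases "Q = 0")
    case False
    then have "degree R = degree Q + 1"
      unfolding RQ by (subst degree_mult_eq) auto
    with \<open>degree R \<le> Suc n\<close> show ?thesis
      by simp
  qed simp
  have c0: "[:- c, 1:] \<noteq> 0"
    by simp
  have "orth_denom L (D * [:- c, 1:]) n R"
    unfolding R_def using orth_denom_lincomb[OF lin mem X(2) Y(2)] .
  then have orthQ: "orth_denom L D n Q"
    unfolding RQ orth_denom_mult_iff[OF c0] .
  have memD: "\<And>X. Fract X D \<in> S"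
    using mem[of "X * [:- c, 1:]" for X] by (simp only: Fract_mult_right_cancel[OF c0])
  obtain \<kappa> where "Q = smult \<kappa> P"
    using multiple_of_degree_le[OF orth_denom_lincomb[OF lin memD] uniq P orthQ degQ] by blast
  then have "smult \<kappa> P * [:- c, 1:] = R"
    by (simp add: RQ)
  then show ?thesis
    by (auto simp: R_def)
qed

lemma orth_linear_factor_relation:
  assumes lin: "linear_functional_on (rat_space a b) L"
    and uniq: "\<And>Q. Q \<noteq> 0 \<Longrightarrow> degree Q = n \<Longrightarrow> orth L a b k m n Q \<Longrightarrow> \<exists>\<kappa>. Q = smult \<kappa> P"
    and P: "degree P = n" "orth L a b k m n P"
    and D: "lin_prod a k' * lin_prod b m' = lin_prod a k * lin_prod b m * [:- c, 1:]"
    and X: "degree X \<le> Suc n" "orth L a b k' m' n X"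
    and Y: "degree Y \<le> Suc n" "orth L a b k' m' n Y"
  shows "\<exists>\<kappa>. smult \<kappa> P * [:- c, 1:] = smult (poly Y c) X - smult (poly X c) Y"
  using assms Fract_lin_prod_in_rat_space[of _ a k' b m']
  by (intro linear_factor_relation[where S = "rat_space a b" and D = "lin_prod a k * lin_prod b m"])
     (simp_all add: orth_iff_orth_denom)

theorem mainTheorem11:
  fixes a b :: "nat \<Rightarrow> complex"
    and L :: "complex poly fract \<Rightarrow> complex"
    and A B C :: "nat \<Rightarrow> complex poly"
    and n :: nat
  assumes distinct_a: "inj a" and distinct_b: "inj b" and disjoint: "range a \<inter> range b = {}"
    and lin: "linear_functional_on (rat_space a b) L"
    and degA: "\<And>m. A m \<noteq> 0 \<and> degree (A m) = m"
    and degB: "\<And>m. B m \<noteq> 0 \<and> degree (B m) = m"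
    and degC: "\<And>m. C m \<noteq> 0 \<and> degree (C m) = m"
    and orthA: "\<And>m. orth L a b (Suc m) m m (A m)"
    and orthB: "\<And>m. orth L a b m (Suc m) m (B m)"
    and orthC: "\<And>m. orth L a b (Suc m) (Suc m) m (C m)"
    and uniqA: "\<And>m Q. Q \<noteq> 0 \<Longrightarrow> degree Q = m \<Longrightarrow> orth L a b (Suc m) m m Q \<Longrightarrow>
                  \<exists>c. Q = smult c (A m)"
    and uniqB: "\<And>m Q. Q \<noteq> 0 \<Longrightarrow> degree Q = m \<Longrightarrow> orth L a b m (Suc m) m Q \<Longrightarrow>
                  \<exists>c. Q = smult c (B m)"
    and uniqC: "\<And>m Q. Q \<noteq> 0 \<Longrightarrow> degree Q = m \<Longrightarrow> orth L a b (Suc m) (Suc m) m Q \<Longrightarrow>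
                  \<exists>c. Q = smult c (C m)"
  shows "\<exists>\<kappa>1 \<kappa>2 \<kappa>3 :: complex.
     smult \<kappa>1 (A n) * [:- b n, 1:] =
       smult (poly (C n) (b n)) (A (Suc n)) - smult (poly (A (Suc n)) (b n)) (C n) \<and>
     smult \<kappa>2 (B n) * [:- a n, 1:] =
       smult (poly (C n) (a n)) (B (Suc n)) - smult (poly (B (Suc n)) (a n)) (C n) \<and>
     smult \<kappa>3 (C n) * [:- a (Suc n), 1:] =
       smult (poly (A (Suc n)) (a (Suc n))) (C (Suc n))
         - smult (poly (C (Suc n)) (a (Suc n))) (A (Suc n))"
proof -
  have degree: "degree (A m) = m" "degree (B m) = m" "degree (C m) = m" for m
    using degA degB degC by auto
  have denominators:
    "lin_prod a (Suc n) * lin_prod b (Suc n) = lin_prod a (Suc n) * lin_prod b n * [:- b n, 1:]"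
    "lin_prod a (Suc n) * lin_prod b (Suc n) = lin_prod a n * lin_prod b (Suc n) * [:- a n, 1:]"
    "lin_prod a (Suc (Suc n)) * lin_prod b (Suc n) =
       lin_prod a (Suc n) * lin_prod b (Suc n) * [:- a (Suc n), 1:]"
    by (simp only: lin_prod_Suc mult_ac)+
  have orthA_Suc: "orth L a b (Suc n) (Suc n) n (A (Suc n))"
    using orthA by (rule orth_Suc_left_lower)
  have orthB_Suc: "orth L a b (Suc n) (Suc n) n (B (Suc n))"
    using orthB by (rule orth_Suc_right_lower)
  have orthC_Suc: "orth L a b (Suc (Suc n)) (Suc n) n (C (Suc n))"
    using orthC by (rule orth_Suc_right_lower)
  have orthA_Suc': "orth L a b (Suc (Suc n)) (Suc n) n (A (Suc n))"
    using orthA by (rule orth_mono) simp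
  have "\<exists>\<kappa>. smult \<kappa> (A n) * [:- b n, 1:] =
      smult (poly (C n) (b n)) (A (Suc n)) - smult (poly (A (Suc n)) (b n)) (C n)"
    by (rule orth_linear_factor_relation[OF lin uniqA _ orthA denominators(1) _ orthA_Suc _ orthC])
       (simp_all add: degree)
  moreover have "\<exists>\<kappa>. smult \<kappa> (B n) * [:- a n, 1:] =
      smult (poly (C n) (a n)) (B (Suc n)) - smult (poly (B (Suc n)) (a n)) (C n)"
    by (rule orth_linear_factor_relation[OF lin uniqB _ orthB denominators(2) _ orthB_Suc _ orthC])
       (simp_all add: degree)
  moreover have "\<exists>\<kappa>. smult \<kappa> (C n) * [:- a (Suc n), 1:] =
      smult (poly (A (Suc n)) (a (Suc n))) (C (Suc n))
        - smult (poly (C (Suc n)) (a (Suc n))) (A (Suc n))"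
    by (rule orth_linear_factor_relation[OF lin uniqC _ orthC denominators(3) _ orthC_Suc _ orthA_Suc'])
       (simp_all add: degree)
  ultimately show ?thesis
    by blast
qed

end
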